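(* Consider the coupled vapour/liquid heat equations on fixed (transformed) domains \[ \beta_v\big((J_v T_v)_\tau + (a_v T_v)_\xi\big) = k_v\big(J_v^{-1} T_{v,\xi}\big)_\xi,\quad \xi\in\Omega_v=[\xi_0,\delta],\qquad \beta_l\big((J_l T_l)_\tau + (a_l T_l)_\eta\big) = k_l\big(J_l^{-1} T_{l,\eta}\big)_\eta,\quad \eta\in\Omega_l=[\delta,\eta_n], \] with the interface conditions imposed strongly, $T_v = T_l = T_\delta$ at the interface $\xi=\eta=\delta$, where the transformed wave speeds are $a_v = u_v - x_\tau$, $a_l = u_l - x_\tau$, the interface (mesh) velocity $\tilde u_\delta = x_\tau$ at the interface satisfies \[ \rho_v h_{lv}\,\tilde u_\delta = \big[k_l J_l^{-1} T_{l,\eta} - k_v J_v^{-1} T_{v,\xi}\big]_\delta , \] and the interface mass relation $(u_l)_\delta = \gamma (u_v)_\delta + (1-\gamma)\tilde u_\delta$, $\gamma=\rho_v/\rho_l$, holds, so that $(a_v)_\delta = (u_v)_\delta - \tilde u_\delta$ and $(a_l)_\delta = \gamma (a_v)_\delta$. Then, ignoring outer boundary contributions, this strong interface treatment is dissipative and energy bounded if $(a_v)_\delta<0$ and $\tilde u_\delta \ge 0$, and it is energy bounded otherwise.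
   Context: Physical setting: a one-dimensional two-phase (vapour $v$, liquid $l$) evaporation problem with a moving evaporation interface $x_\delta(t)$, originally $\beta_v((T_v)_t + u_v (T_v)_x) = k_v (T_v)_{xx}$ on $[x_0,x_\delta]$ and $\beta_l((T_l)_t + u_l (T_l)_x) = k_l (T_l)_{xx}$ on $[x_\delta,x_n]$, with $T_v=T_l=T_\delta$ at $x_\delta(t)$. Here $T$ is temperature, $\rho$ density, $C_p$ specific heat at constant pressure, $k>0$ the scaled heat conduction coefficient, $\beta=\rho C_p>0$; the given evaporation temperature $T_\delta>0$ and latent heat $h_{lv}>0$ are external data; the velocities $u_v,u_l$ are positive. The problem is mapped to fixed domains by time-dependent coordinate transformations $x=x(\xi,\tau)$ (vapour), $x=x(\eta,\tau)$ (liquid), $t=\tau$, with Jacobians $J_v,J_l>0$ satisfying $J_v\xi_x=1$, $J_v\xi_t=-x_\tau$, $(J_v)_\tau+(J_v\xi_t)_\xi=0$ and analogously $J_l\eta_x=1$, $J_l\eta_t=-x_\tau$, $(J_l)_\tau+(J_l\eta_t)_\eta=0$. The paper asserts that $C_0=(\beta_l\gamma-\beta_v)T_\delta^2=\rho_v[(C_p)_l-(C_p)_v]T_\delta^2>0$ and $C_1=2T_\delta\rho_v h_{lv}>0$. The energy is $E(\tau)=\beta_v\int_{\xi_0}^{\delta}T_v^2J_v\,d\xi+\beta_l\int_\delta^{\eta_n}T_l^2J_l\,d\eta$; "energy bounded" means (with outer-boundary terms ignored) that $E$ at any time is bounded by its initial value plus the time integral of interface terms that are bounded in terms of the given data (using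 e.g. that $\int_0^t\tilde u_\delta\,d\tau = x_\delta(t)-x_\delta(0)$ is bounded by the domain size); "dissipative" means the interface terms in the energy rate $\frac{dE}{d\tau}+2k_v\int J_v^{-1}T_{v,\xi}^2d\xi+2k_l\int J_l^{-1}T_{l,\eta}^2d\eta$ are non-positive. *)

theory Defs
  imports "HOL-Analysis.Analysis"
begin

definition pdx :: "(real \<Rightarrow> real \<Rightarrow> real) \<Rightarrow> real \<Rightarrow> real \<Rightarrow> real" where
  "pdx f x t = deriv (\<lambda>s. f s t) x"

definition pdt :: "(real \<Rightarrow> real \<Rightarrow> real) \<Rightarrow> real \<Rightarrow> real \<Rightarrow> real" where
  "pdt f x t = deriv (\<lambda>s. f x s) t"

definition C1_plane :: "(real \<Rightarrow> real \<Rightarrow> real) \<Rightarrow> bool" where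
  "C1_plane f \<longleftrightarrow>
     (\<forall>x t. (\<lambda>s. f s t) differentiable (at x) \<and> (\<lambda>s. f x s) differentiable (at t)) \<and>
     continuous_on UNIV (\<lambda>p. f (fst p) (snd p)) \<and>
     continuous_on UNIV (\<lambda>p. pdx f (fst p) (snd p)) \<and>
     continuous_on UNIV (\<lambda>p. pdt f (fst p) (snd p))"

definition C2_plane :: "(real \<Rightarrow> real \<Rightarrow> real) \<Rightarrow> bool" where
  "C2_plane f \<longleftrightarrow> C1_plane f \<and> C1_plane (pdx f) \<and> C1_plane (pdt f)"

end

theory Submission
  imports Defs
begin

(* Differentiating under the integral sign and using the transformed heat equation, the rate of
   change of \<beta> \<integral> T\<^sup>2 J in each phase is the jump of the energy flux 2 k T J\<^sup>-\<^sup>1 T_\<xi> - \<beta> a T\<^sup>2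
   across the phase minus the dissipation 2 k \<integral> J\<^sup>-\<^sup>1 T_\<xi>\<^sup>2.  At the interface T = T_\<delta> on both
   sides, so the Stefan condition and the mass relation a_l = \<gamma> a_v turn the two interface fluxes
   into C0 a_v - C1 u_\<delta>, which is non-positive when a_v < 0 \<le> u_\<delta> because C0, C1 > 0.  In general
   a_v = u_v - u_\<delta> with u_\<delta> = d x_\<delta>/d\<tau>, so the interface term integrates in time to data. *)

lemma C1_plane_has_pdx: "C1_plane f \<Longrightarrow> ((\<lambda>s. f s t) has_real_derivative pdx f x t) (at x)"
  unfolding C1_plane_def pdx_def by (simp add: DERIV_deriv_iff_real_differentiable)

lemma C1_plane_has_pdt: "C1_plane f \<Longrightarrow> ((\<lambda>s. f x s) has_real_derivative pdt f x t) (at t)"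
  unfolding C1_plane_def pdt_def by (simp add: DERIV_deriv_iff_real_differentiable)

lemma continuous_on_compose_plane:
  assumes "continuous_on UNIV (\<lambda>p. F (fst p) (snd p))" "continuous_on S g" "continuous_on S h"
  shows "continuous_on S (\<lambda>y. F (g y) (h y))"
  using continuous_on_compose2[OF assms(1) continuous_on_Pair[OF assms(2,3)]] by simp

lemma C1_plane_continuous_on:
  assumes "C1_plane f" "continuous_on S g" "continuous_on S h"
  shows "continuous_on S (\<lambda>y. f (g y) (h y))"
    and "continuous_on S (\<lambda>y. pdx f (g y) (h y))"
    and "continuous_on S (\<lambda>y. pdt f (g y) (h y))"
  using assms unfolding C1_plane_def by (auto intro: continuous_on_compose_plane)

lemma integral_eq_diff_of_has_real_derivative:
  assumes "a \<le> b" "\<And>x. x \<in> {a..b} \<Longrightarrow> (F has_real_derivative f x) (at x)"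
  shows "integral {a..b} f = F b - F a"
proof (rule integral_unique, rule fundamental_theorem_of_calculus[OF assms(1)])
  show "(F has_vector_derivative f x) (at x within {a..b})" if "x \<in> {a..b}" for x
    using assms(2)[OF that]
    by (simp add: has_real_derivative_iff_has_vector_derivative[symmetric] has_field_derivative_at_within)
qed

lemma integral_nonneg_unconditional:
  fixes f :: "'a::euclidean_space \<Rightarrow> real"
  shows "(\<And>x. x \<in> S \<Longrightarrow> 0 \<le> f x) \<Longrightarrow> 0 \<le> integral S f"
  by (cases "f integrable_on S") (auto intro: integral_nonneg simp: not_integrable_integral)

lemma leibniz_rule_real_derivative:
  fixes f f' :: "real \<Rightarrow> real \<Rightarrow> real"
  assumes "\<And>s t. ((\<lambda>t. f s t) has_real_derivative f' s t) (at t)"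
    and "\<And>t. continuous_on {a..b} (\<lambda>s. f s t)"
    and "continuous_on (UNIV \<times> {a..b}) (\<lambda>(t, s). f' s t)"
  shows "((\<lambda>t. integral {a..b} (\<lambda>s. f s t)) has_real_derivative integral {a..b} (\<lambda>s. f' s t)) (at t)"
proof -
  have "((\<lambda>t. integral (cbox a b) (\<lambda>s. f s t)) has_field_derivative integral (cbox a b) (\<lambda>s. f' s t))
          (at t within UNIV)"
    by (rule leibniz_rule_field_derivative)
       (use assms in \<open>auto simp: cbox_interval intro: integrable_continuous_interval\<close>)
  then show ?thesis by (simp add: cbox_interval)
qed

(* Both sides are the x-derivative of pdt f x t - pdt f a t: for the left one, write it as
   \<integral>\<^sub>a\<^sup>x pdt (pdx f) s t ds by differentiating \<integral>\<^sub>a\<^sup>x pdx f s t ds = f x t - f a t under the integral. *)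
lemma pdt_pdx_commute:
  assumes "C2_plane f"
  shows "pdt (pdx f) x t = pdx (pdt f) x t"
proof -
  have f: "C1_plane f" and fx: "C1_plane (pdx f)" and ft: "C1_plane (pdt f)"
    using assms unfolding C2_plane_def by auto
  define a b where "a = x - 1" and "b = x + 1"
  have ab: "a < x" "x < b" by (auto simp: a_def b_def)
  have cont: "continuous_on {a..b} (\<lambda>s. pdt (pdx f) s t)"
    by (rule C1_plane_continuous_on(3)[OF fx]) (auto intro: continuous_intros)
  have primitive: "integral {a..y} (\<lambda>s. pdt (pdx f) s t) = pdt f y t - pdt f a t" if "a \<le> y" for y
  proof (rule DERIV_unique)
    have "integral {a..y} (\<lambda>s. pdx f s t') = f y t' - f a t'" for t'
      using that by (intro integral_eq_diff_of_has_real_derivative C1_plane_has_pdx[OF f])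
    moreover have "((\<lambda>t. integral {a..y} (\<lambda>s. pdx f s t)) has_real_derivative
                     integral {a..y} (\<lambda>s. pdt (pdx f) s t)) (at t)"
      by (rule leibniz_rule_real_derivative[OF C1_plane_has_pdt[OF fx]])
         (auto simp: case_prod_unfold intro!: C1_plane_continuous_on[OF fx] continuous_intros)
    ultimately show "((\<lambda>t. f y t - f a t) has_real_derivative integral {a..y} (\<lambda>s. pdt (pdx f) s t)) (at t)"
      by simp
    show "((\<lambda>t. f y t - f a t) has_real_derivative pdt f y t - pdt f a t) (at t)"
      by (intro DERIV_diff C1_plane_has_pdt[OF f])
  qed
  have "((\<lambda>y. integral {a..y} (\<lambda>s. pdt (pdx f) s t)) has_real_derivative pdt (pdx f) x t) (at x)"
    using integral_has_real_derivative[OF cont, of x] ab by (simp add: at_within_Icc_at)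
  then have "((\<lambda>y. pdt f y t - pdt f a t) has_real_derivative pdt (pdx f) x t) (at x)"
    by (rule has_field_derivative_transform_within_open[of _ _ _ "{a<..}"]) (use ab primitive in auto)
  moreover have "((\<lambda>y. pdt f y t - pdt f a t) has_real_derivative pdx (pdt f) x t) (at x)"
    using DERIV_diff[OF C1_plane_has_pdx[OF ft] DERIV_const] by simp
  ultimately show ?thesis by (rule DERIV_unique)
qed

(* The geometric conservation law J_\<tau> = (x_\<tau>)_\<xi> cancels the terms coming from differentiating
   J = x_\<xi> in time and the wave speed a = u - x_\<tau> in space. *)
lemma transformed_heat_equation_nonconservative:
  assumes x: "C2_plane x" and T: "C1_plane T"
    and pde: "\<beta> * (pdt (\<lambda>\<xi> t. pdx x \<xi> t * T \<xi> t) \<xi> \<tau> + pdx (\<lambda>\<xi> t. (u t - pdt x \<xi> t) * T \<xi> t) \<xi> \<tau>)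
              = k * pdx (\<lambda>\<xi> t. pdx T \<xi> t / pdx x \<xi> t) \<xi> \<tau>"
  shows "\<beta> * (pdx x \<xi> \<tau> * pdt T \<xi> \<tau> + (u \<tau> - pdt x \<xi> \<tau>) * pdx T \<xi> \<tau>)
           = k * pdx (\<lambda>\<xi> t. pdx T \<xi> t / pdx x \<xi> t) \<xi> \<tau>"
proof -
  have xx: "C1_plane (pdx x)" and xt: "C1_plane (pdt x)" using x unfolding C2_plane_def by auto
  have dt: "pdt (\<lambda>\<xi> t. pdx x \<xi> t * T \<xi> t) \<xi> \<tau> = pdt (pdx x) \<xi> \<tau> * T \<xi> \<tau> + pdx x \<xi> \<tau> * pdt T \<xi> \<tau>"
    unfolding pdt_def[of "\<lambda>\<xi> t. pdx x \<xi> t * T \<xi> t"]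
    by (rule DERIV_imp_deriv)
       (use C1_plane_has_pdt[OF T] C1_plane_has_pdt[OF xx] in \<open>auto intro!: derivative_eq_intros\<close>)
  have dx: "pdx (\<lambda>\<xi> t. (u t - pdt x \<xi> t) * T \<xi> t) \<xi> \<tau>
                   = - pdx (pdt x) \<xi> \<tau> * T \<xi> \<tau> + (u \<tau> - pdt x \<xi> \<tau>) * pdx T \<xi> \<tau>"
    unfolding pdx_def[of "\<lambda>\<xi> t. (u t - pdt x \<xi> t) * T \<xi> t"]
    by (rule DERIV_imp_deriv)
       (use C1_plane_has_pdx[OF T] C1_plane_has_pdx[OF xt] in \<open>auto intro!: derivative_eq_intros\<close>)
  have "pdt (pdx x) \<xi> \<tau> = pdx (pdt x) \<xi> \<tau>" by (rule pdt_pdx_commute[OF x])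
  then show ?thesis using pde unfolding dt dx by (simp add: algebra_simps)
qed

definition energy_flux ::
    "real \<Rightarrow> real \<Rightarrow> (real \<Rightarrow> real \<Rightarrow> real) \<Rightarrow> (real \<Rightarrow> real \<Rightarrow> real) \<Rightarrow> (real \<Rightarrow> real)
     \<Rightarrow> real \<Rightarrow> real \<Rightarrow> real" where
  "energy_flux \<beta> k x T u \<xi> \<tau> = 2 * k * T \<xi> \<tau> * (pdx T \<xi> \<tau> / pdx x \<xi> \<tau>) - \<beta> * (u \<tau> - pdt x \<xi> \<tau>) * (T \<xi> \<tau>)\<^sup>2"

lemma energy_flux_has_real_derivative:
  assumes x: "C2_plane x" and T: "C2_plane T" and J: "pdx x \<xi> \<tau> \<noteq> 0"
    and pde: "\<beta> * (pdt (\<lambda>\<xi> t. pdx x \<xi> t * T \<xi> t) \<xi> \<tau> + pdx (\<lambda>\<xi> t. (u t - pdt x \<xi> t) * T \<xi> t) \<xi> \<tau>)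
              = k * pdx (\<lambda>\<xi> t. pdx T \<xi> t / pdx x \<xi> t) \<xi> \<tau>"
  shows "((\<lambda>\<xi>. energy_flux \<beta> k x T u \<xi> \<tau>) has_real_derivative
           \<beta> * (2 * T \<xi> \<tau> * pdt T \<xi> \<tau> * pdx x \<xi> \<tau> + (T \<xi> \<tau>)\<^sup>2 * pdt (pdx x) \<xi> \<tau>)
           + 2 * k * ((pdx T \<xi> \<tau>)\<^sup>2 / pdx x \<xi> \<tau>)) (at \<xi>)"
proof -
  have T1: "C1_plane T" and Tx: "C1_plane (pdx T)" and xx: "C1_plane (pdx x)" and xt: "C1_plane (pdt x)"
    using x T unfolding C2_plane_def by auto
  define q where "q = pdx (\<lambda>\<xi> t. pdx T \<xi> t / pdx x \<xi> t) \<xi> \<tau>"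
  define V where "V s = pdx T s \<tau> / pdx x s \<tau>" for s
  have "V differentiable (at \<xi>)"
    unfolding V_def using C1_plane_has_pdx[OF Tx, of \<tau> \<xi>] C1_plane_has_pdx[OF xx, of \<tau> \<xi>] J
    by (auto intro!: derivative_intros simp: real_differentiable_def)
  then have "(V has_real_derivative q) (at \<xi>)"
    unfolding q_def pdx_def V_def by (simp add: DERIV_deriv_iff_real_differentiable)
  moreover have "(\<lambda>\<xi>. energy_flux \<beta> k x T u \<xi> \<tau>)
                   = (\<lambda>\<xi>. 2 * k * T \<xi> \<tau> * V \<xi> - \<beta> * (u \<tau> - pdt x \<xi> \<tau>) * (T \<xi> \<tau>)\<^sup>2)"
    by (simp add: energy_flux_def V_def)
  ultimately have flux': "((\<lambda>\<xi>. energy_flux \<beta> k x T u \<xi> \<tau>) has_real_derivative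
      2 * k * (pdx T \<xi> \<tau> * V \<xi> + T \<xi> \<tau> * q)
      - \<beta> * (- pdx (pdt x) \<xi> \<tau> * (T \<xi> \<tau>)\<^sup>2 + (u \<tau> - pdt x \<xi> \<tau>) * (2 * T \<xi> \<tau> * pdx T \<xi> \<tau>))) (at \<xi>)"
    using C1_plane_has_pdx[OF T1, of \<tau> \<xi>] C1_plane_has_pdx[OF xt, of \<tau> \<xi>]
    by (auto intro!: derivative_eq_intros simp: power2_eq_square algebra_simps)
  have kq: "k * q = \<beta> * (pdx x \<xi> \<tau> * pdt T \<xi> \<tau> + (u \<tau> - pdt x \<xi> \<tau>) * pdx T \<xi> \<tau>)"
    unfolding q_def using transformed_heat_equation_nonconservative[OF x T1 pde] by simp
  have "2 * k * (pdx T \<xi> \<tau> * V \<xi> + T \<xi> \<tau> * q)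
      - \<beta> * (- pdx (pdt x) \<xi> \<tau> * (T \<xi> \<tau>)\<^sup>2 + (u \<tau> - pdt x \<xi> \<tau>) * (2 * T \<xi> \<tau> * pdx T \<xi> \<tau>))
      = 2 * k * ((pdx T \<xi> \<tau>)\<^sup>2 / pdx x \<xi> \<tau>) + 2 * T \<xi> \<tau> * (k * q)
        + \<beta> * pdx (pdt x) \<xi> \<tau> * (T \<xi> \<tau>)\<^sup>2 - 2 * \<beta> * (u \<tau> - pdt x \<xi> \<tau>) * T \<xi> \<tau> * pdx T \<xi> \<tau>"
    by (simp add: V_def algebra_simps power2_eq_square)
  also have "\<dots> = \<beta> * (2 * T \<xi> \<tau> * pdt T \<xi> \<tau> * pdx x \<xi> \<tau> + (T \<xi> \<tau>)\<^sup>2 * pdt (pdx x) \<xi> \<tau>)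
           + 2 * k * ((pdx T \<xi> \<tau>)\<^sup>2 / pdx x \<xi> \<tau>)"
    unfolding kq pdt_pdx_commute[OF x] by (simp add: algebra_simps)
  finally show ?thesis using flux' by simp
qed

lemma continuous_on_energy_flux:
  assumes "C1_plane x" "C1_plane T" "continuous_on S u" "\<And>\<tau>. \<tau> \<in> S \<Longrightarrow> pdx x \<xi> \<tau> \<noteq> 0"
  shows "continuous_on S (\<lambda>\<tau>. energy_flux \<beta> k x T u \<xi> \<tau>)"
  unfolding energy_flux_def using assms
  by (intro continuous_intros C1_plane_continuous_on[OF assms(1)] C1_plane_continuous_on[OF assms(2)]) auto

lemma energy_rate_one_phase:
  assumes x: "C2_plane x" and T: "C2_plane T" and "p \<le> q"
    and J: "\<forall>\<xi>\<in>{p..q}. 0 < pdx x \<xi> \<tau>"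
    and pde: "\<forall>\<xi>\<in>{p..q}.
      \<beta> * (pdt (\<lambda>\<xi> t. pdx x \<xi> t * T \<xi> t) \<xi> \<tau> + pdx (\<lambda>\<xi> t. (u t - pdt x \<xi> t) * T \<xi> t) \<xi> \<tau>)
      = k * pdx (\<lambda>\<xi> t. pdx T \<xi> t / pdx x \<xi> t) \<xi> \<tau>"
  shows "((\<lambda>\<tau>. \<beta> * integral {p..q} (\<lambda>\<xi>. (T \<xi> \<tau>)\<^sup>2 * pdx x \<xi> \<tau>)) has_real_derivative
           energy_flux \<beta> k x T u q \<tau> - energy_flux \<beta> k x T u p \<tau>
           - 2 * k * integral {p..q} (\<lambda>\<xi>. (pdx T \<xi> \<tau>)\<^sup>2 / pdx x \<xi> \<tau>)) (at \<tau>)"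
proof -
  have x1: "C1_plane x" and xx: "C1_plane (pdx x)" and T1: "C1_plane T"
    using x T unfolding C2_plane_def by auto
  define e' where "e' \<xi> t = 2 * T \<xi> t * pdt T \<xi> t * pdx x \<xi> t + (T \<xi> t)\<^sup>2 * pdt (pdx x) \<xi> t" for \<xi> t
  define G where "G = (\<lambda>\<xi>. (pdx T \<xi> \<tau>)\<^sup>2 / pdx x \<xi> \<tau>)"
  have E': "((\<lambda>\<tau>. integral {p..q} (\<lambda>\<xi>. (T \<xi> \<tau>)\<^sup>2 * pdx x \<xi> \<tau>)) has_real_derivative
          integral {p..q} (\<lambda>\<xi>. e' \<xi> \<tau>)) (at \<tau>)"
  proof (rule leibniz_rule_real_derivative)
    show "((\<lambda>t. (T s t)\<^sup>2 * pdx x s t) has_real_derivative e' s t) (at t)" for s t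
      using C1_plane_has_pdt[OF T1, of s t] C1_plane_has_pdt[OF xx, of s t] unfolding e'_def
      by (auto intro!: derivative_eq_intros simp: power2_eq_square algebra_simps)
  qed (auto simp: e'_def case_prod_unfold intro!: continuous_intros
                  C1_plane_continuous_on[OF T1] C1_plane_continuous_on[OF xx])
  have ftc: "integral {p..q} (\<lambda>\<xi>. \<beta> * e' \<xi> \<tau> + 2 * k * G \<xi>)
                   = energy_flux \<beta> k x T u q \<tau> - energy_flux \<beta> k x T u p \<tau>"
    unfolding e'_def G_def using \<open>p \<le> q\<close> J pde
    by (intro integral_eq_diff_of_has_real_derivative energy_flux_has_real_derivative[OF x T]) force+
  have "(\<lambda>\<xi>. e' \<xi> \<tau>) integrable_on {p..q}"
    unfolding e'_def
    by (intro integrable_continuous_interval continuous_intros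
          C1_plane_continuous_on[OF T1] C1_plane_continuous_on[OF xx])
  moreover have "G integrable_on {p..q}"
    unfolding G_def using J
    by (intro integrable_continuous_interval continuous_intros
          C1_plane_continuous_on[OF T1] C1_plane_continuous_on[OF x1]) auto
  ultimately have "integral {p..q} (\<lambda>\<xi>. \<beta> * e' \<xi> \<tau> + 2 * k * G \<xi>)
                     = \<beta> * integral {p..q} (\<lambda>\<xi>. e' \<xi> \<tau>) + 2 * k * integral {p..q} G"
    by (subst integral_add) (auto intro: integrable_on_mult_right)
  then have "\<beta> * integral {p..q} (\<lambda>\<xi>. e' \<xi> \<tau>)
               = energy_flux \<beta> k x T u q \<tau> - energy_flux \<beta> k x T u p \<tau> - 2 * k * integral {p..q} G"
    using ftc by simp
  then show ?thesis
    using DERIV_cmult[OF E', of \<beta>] unfolding G_def by simp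
qed

lemma interface_energy_flux_jump:
  fixes uv ul ud \<gamma> \<rho> h kv kl qv ql \<beta>v \<beta>l Td :: real
  assumes mass: "ul = \<gamma> * uv + (1 - \<gamma>) * ud" and stefan: "\<rho> * h * ud = kl * ql - kv * qv"
  shows "(2 * kv * Td * qv - \<beta>v * (uv - ud) * Td\<^sup>2) - (2 * kl * Td * ql - \<beta>l * (ul - ud) * Td\<^sup>2)
           = (\<beta>l * \<gamma> - \<beta>v) * Td\<^sup>2 * (uv - ud) - 2 * Td * \<rho> * h * ud"
proof -
  have "2 * Td * \<rho> * h * ud = 2 * Td * (kl * ql - kv * qv)"
    using stefan by (metis mult.assoc)
  then show ?thesis unfolding mass by (simp add: algebra_simps)
qed

lemma diff_le_integral_of_has_real_derivative_le:
  fixes F F' f :: "real \<Rightarrow> real"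
  assumes "a \<le> b" and f: "continuous_on {a..b} f"
    and F': "\<And>\<tau>. \<tau> \<in> {a..b} \<Longrightarrow> (F has_real_derivative F' \<tau>) (at \<tau> within {a..b})"
    and le: "\<And>\<tau>. \<tau> \<in> {a..b} \<Longrightarrow> F' \<tau> \<le> f \<tau>"
  shows "F b - F a \<le> integral {a..b} f"
proof -
  define G where "G \<tau> = F \<tau> - integral {a..\<tau>} f" for \<tau>
  have G': "(G has_real_derivative F' \<tau> - f \<tau>) (at \<tau> within {a..b})" if "\<tau> \<in> {a..b}" for \<tau>
    unfolding G_def by (rule DERIV_diff[OF F'[OF that] integral_has_real_derivative[OF f that]])
  have "G b \<le> G a"
  proof (rule DERIV_nonpos_imp_decreasing_open[OF \<open>a \<le> b\<close>])
    show "\<exists>y. (G has_real_derivative y) (at \<tau>) \<and> y \<le> 0" if "a < \<tau>" "\<tau> < b" for \<tau>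
      using G'[of \<tau>] le[of \<tau>] that by (auto simp: at_within_Icc_at)
    show "continuous_on {a..b} G"
      using G' DERIV_continuous continuous_on_eq_continuous_within by blast
  qed
  then show ?thesis by (simp add: G_def)
qed

lemma energy_bound_of_energy_rate:
  fixes E x\<delta> u\<delta> uv BO D :: "real \<Rightarrow> real"
  assumes "a \<le> b" and uv: "continuous_on {a..b} uv" and BO: "continuous_on {a..b} BO"
    and E': "\<And>\<tau>. \<tau> \<in> {a..b} \<Longrightarrow>
               (E has_real_derivative C0 * (uv \<tau> - u\<delta> \<tau>) - C1 * u\<delta> \<tau> + BO \<tau> - D \<tau>) (at \<tau>)"
    and x\<delta>': "\<And>\<tau>. \<tau> \<in> {a..b} \<Longrightarrow> (x\<delta> has_real_derivative u\<delta> \<tau>) (at \<tau>)"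
    and D: "\<And>\<tau>. \<tau> \<in> {a..b} \<Longrightarrow> 0 \<le> D \<tau>"
  shows "E b \<le> E a + C0 * integral {a..b} uv - (C0 + C1) * (x\<delta> b - x\<delta> a) + integral {a..b} BO"
proof -
  have "(E b + (C0 + C1) * x\<delta> b) - (E a + (C0 + C1) * x\<delta> a) \<le> integral {a..b} (\<lambda>\<tau>. C0 * uv \<tau> + BO \<tau>)"
  proof (rule diff_le_integral_of_has_real_derivative_le
      [where F' = "\<lambda>\<tau>. C0 * (uv \<tau> - u\<delta> \<tau>) - C1 * u\<delta> \<tau> + BO \<tau> - D \<tau> + (C0 + C1) * u\<delta> \<tau>"])
    show "continuous_on {a..b} (\<lambda>\<tau>. C0 * uv \<tau> + BO \<tau>)"
      using uv BO by (intro continuous_on_add continuous_on_mult_left)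
    fix \<tau> assume \<tau>: "\<tau> \<in> {a..b}"
    show "((\<lambda>\<tau>. E \<tau> + (C0 + C1) * x\<delta> \<tau>) has_real_derivative
            C0 * (uv \<tau> - u\<delta> \<tau>) - C1 * u\<delta> \<tau> + BO \<tau> - D \<tau> + (C0 + C1) * u\<delta> \<tau>) (at \<tau> within {a..b})"
      by (rule has_field_derivative_at_within[OF DERIV_add[OF E'[OF \<tau>] DERIV_cmult[OF x\<delta>'[OF \<tau>]]]])
    show "C0 * (uv \<tau> - u\<delta> \<tau>) - C1 * u\<delta> \<tau> + BO \<tau> - D \<tau> + (C0 + C1) * u\<delta> \<tau> \<le> C0 * uv \<tau> + BO \<tau>"
      using D[OF \<tau>] by (simp add: algebra_simps)
  qed (rule \<open>a \<le> b\<close>)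
  moreover have "integral {a..b} (\<lambda>\<tau>. C0 * uv \<tau> + BO \<tau>) = C0 * integral {a..b} uv + integral {a..b} BO"
    using uv BO by (subst integral_add) (auto intro: integrable_continuous_interval integrable_on_mult_right)
  ultimately show ?thesis by (simp add: algebra_simps)
qed

theorem proposition1:
  fixes xi0 delta etan tf kv kl rhov rhol Cpv Cpl hlv Tdelta :: real
    and betav betal gamma C0 C1 :: real
    and xv xl Tv Tl Jv Jl av al :: "real \<Rightarrow> real \<Rightarrow> real"
    and uv ul xdelta ud E D BO :: "real \<Rightarrow> real"
  assumes dom: "xi0 < delta" "delta < etan" "0 \<le> tf"
    and pos: "0 < kv" "0 < kl" "0 < rhov" "0 < rhol" "0 < Cpv" "0 < Cpl" "0 < hlv" "0 < Tdelta"
    and Cp: "Cpv < Cpl"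
    and beta_def: "betav = rhov * Cpv" "betal = rhol * Cpl"
    and gamma_def: "gamma = rhov / rhol"
    and C_def: "C0 = (betal * gamma - betav) * Tdelta ^ 2" "C1 = 2 * Tdelta * rhov * hlv"
    and smooth: "C2_plane xv" "C2_plane xl" "C2_plane Tv" "C2_plane Tl" "continuous_on UNIV uv"
    and J_def: "Jv = pdx xv" "Jl = pdx xl"
    and Jpos: "\<forall>xi\<in>{xi0..delta}. \<forall>tau\<in>{0..tf}. 0 < Jv xi tau"
              "\<forall>eta\<in>{delta..etan}. \<forall>tau\<in>{0..tf}. 0 < Jl eta tau"
    and a_def: "av = (\<lambda>xi tau. uv tau - pdt xv xi tau)" "al = (\<lambda>eta tau. ul tau - pdt xl eta tau)"
    and upos: "\<forall>tau\<in>{0..tf}. 0 < uv tau \<and> 0 < ul tau"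
    and pde_v: "\<forall>xi\<in>{xi0..delta}. \<forall>tau\<in>{0..tf}.
        betav * (pdt (\<lambda>x t. Jv x t * Tv x t) xi tau + pdx (\<lambda>x t. av x t * Tv x t) xi tau)
        = kv * pdx (\<lambda>x t. pdx Tv x t / Jv x t) xi tau"
    and pde_l: "\<forall>eta\<in>{delta..etan}. \<forall>tau\<in>{0..tf}.
        betal * (pdt (\<lambda>x t. Jl x t * Tl x t) eta tau + pdx (\<lambda>x t. al x t * Tl x t) eta tau)
        = kl * pdx (\<lambda>x t. pdx Tl x t / Jl x t) eta tau"
    and interface_pos: "xdelta = (\<lambda>tau. xv delta tau)" "\<forall>tau. xl delta tau = xv delta tau"
    and ud_def: "ud = (\<lambda>tau. pdt xv delta tau)"
    and interface_T: "\<forall>tau\<in>{0..tf}. Tv delta tau = Tdelta \<and> Tl delta tau = Tdelta"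
    and stefan: "\<forall>tau\<in>{0..tf}.
        rhov * hlv * ud tau = kl * pdx Tl delta tau / Jl delta tau - kv * pdx Tv delta tau / Jv delta tau"
    and mass: "\<forall>tau\<in>{0..tf}. ul tau = gamma * uv tau + (1 - gamma) * ud tau"
    and E_def: "E = (\<lambda>tau. betav * integral {xi0..delta} (\<lambda>xi. (Tv xi tau)\<^sup>2 * Jv xi tau)
                         + betal * integral {delta..etan} (\<lambda>eta. (Tl eta tau)\<^sup>2 * Jl eta tau))"
    and D_def: "D = (\<lambda>tau. 2 * kv * integral {xi0..delta} (\<lambda>xi. (pdx Tv xi tau)\<^sup>2 / Jv xi tau)
                         + 2 * kl * integral {delta..etan} (\<lambda>eta. (pdx Tl eta tau)\<^sup>2 / Jl eta tau))"
    and BO_def: "BO = (\<lambda>tau. (betav * av xi0 tau * (Tv xi0 tau)\<^sup>2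
                               - 2 * kv * Tv xi0 tau * pdx Tv xi0 tau / Jv xi0 tau)
                          + (- betal * al etan tau * (Tl etan tau)\<^sup>2
                               + 2 * kl * Tl etan tau * pdx Tl etan tau / Jl etan tau))"
  shows "(\<forall>tau\<in>{0..tf}.
            (E has_real_derivative (C0 * av delta tau - C1 * ud tau + BO tau - D tau)) (at tau))
       \<and> (\<forall>tau\<in>{0..tf}. av delta tau < 0 \<and> 0 \<le> ud tau \<longrightarrow> C0 * av delta tau - C1 * ud tau \<le> 0)
       \<and> (\<forall>t\<in>{0..tf}. E t \<le> E 0 + C0 * integral {0..t} uv - (C0 + C1) * (xdelta t - xdelta 0)
                                + integral {0..t} BO)"
proof -
  have x1v: "C1_plane xv" and x1l: "C1_plane xl" and T1v: "C1_plane Tv" and T1l: "C1_plane Tl"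
    using smooth unfolding C2_plane_def by auto
  let ?Fv = "energy_flux betav kv xv Tv uv" and ?Fl = "energy_flux betal kl xl Tl ul"
  have BO_flux: "BO = (\<lambda>\<tau>. ?Fl etan \<tau> - ?Fv xi0 \<tau>)"
    unfolding BO_def energy_flux_def a_def J_def times_divide_eq_right by (rule ext) argo
  have rate: "(E has_real_derivative C0 * av delta \<tau> - C1 * ud \<tau> + BO \<tau> - D \<tau>) (at \<tau>)"
    if \<tau>: "\<tau> \<in> {0..tf}" for \<tau>
  proof -
    have Ev: "((\<lambda>\<tau>. betav * integral {xi0..delta} (\<lambda>\<xi>. (Tv \<xi> \<tau>)\<^sup>2 * Jv \<xi> \<tau>)) has_real_derivative
        ?Fv delta \<tau> - ?Fv xi0 \<tau> - 2 * kv * integral {xi0..delta} (\<lambda>\<xi>. (pdx Tv \<xi> \<tau>)\<^sup>2 / Jv \<xi> \<tau>)) (at \<tau>)"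
      unfolding J_def
      by (rule energy_rate_one_phase[OF smooth(1,3)]) (use dom Jpos(1) pde_v \<tau> in \<open>auto simp: J_def a_def\<close>)
    have El: "((\<lambda>\<tau>. betal * integral {delta..etan} (\<lambda>\<eta>. (Tl \<eta> \<tau>)\<^sup>2 * Jl \<eta> \<tau>)) has_real_derivative
        ?Fl etan \<tau> - ?Fl delta \<tau> - 2 * kl * integral {delta..etan} (\<lambda>\<eta>. (pdx Tl \<eta> \<tau>)\<^sup>2 / Jl \<eta> \<tau>)) (at \<tau>)"
      unfolding J_def
      by (rule energy_rate_one_phase[OF smooth(2,4)]) (use dom Jpos(2) pde_l \<tau> in \<open>auto simp: J_def a_def\<close>)
    have ms: "ul \<tau> = gamma * uv \<tau> + (1 - gamma) * ud \<tau>" using mass \<tau> by simp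
    have st: "rhov * hlv * ud \<tau> = kl * (pdx Tl delta \<tau> / pdx xl delta \<tau>) - kv * (pdx Tv delta \<tau> / pdx xv delta \<tau>)"
      using stefan \<tau> unfolding J_def by simp
    have "xl delta = xv delta" using interface_pos(2) by (simp add: fun_eq_iff)
    then have "pdt xl delta \<tau> = ud \<tau>" unfolding ud_def pdt_def by simp
    then have "?Fv delta \<tau> - ?Fl delta \<tau> = C0 * av delta \<tau> - C1 * ud \<tau>"
      using interface_energy_flux_jump[OF ms st, where Td = Tdelta and ?\<beta>v = betav and ?\<beta>l = betal] interface_T \<tau>
      unfolding energy_flux_def C_def a_def ud_def by (simp add: mult.assoc)
    then have "?Fv delta \<tau> - ?Fv xi0 \<tau> - 2 * kv * integral {xi0..delta} (\<lambda>\<xi>. (pdx Tv \<xi> \<tau>)\<^sup>2 / Jv \<xi> \<tau>)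
        + (?Fl etan \<tau> - ?Fl delta \<tau> - 2 * kl * integral {delta..etan} (\<lambda>\<eta>. (pdx Tl \<eta> \<tau>)\<^sup>2 / Jl \<eta> \<tau>))
        = C0 * av delta \<tau> - C1 * ud \<tau> + BO \<tau> - D \<tau>"
      unfolding BO_flux D_def by simp
    then show ?thesis using DERIV_add[OF Ev El] unfolding E_def by simp
  qed
  have C0_pos: "0 < C0"
  proof -
    have "C0 = rhov * (Cpl - Cpv) * Tdelta ^ 2"
      unfolding C_def beta_def gamma_def using pos by (simp add: field_simps)
    then show ?thesis using pos Cp by simp
  qed
  have C1_pos: "0 < C1" unfolding C_def using pos by simp
  have dissipative: "C0 * av delta \<tau> - C1 * ud \<tau> \<le> 0" if "av delta \<tau> < 0" "0 \<le> ud \<tau>" for \<tau>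
    using mult_pos_neg[OF C0_pos that(1)] mult_nonneg_nonneg[OF less_imp_le[OF C1_pos] that(2)] by linarith
  have bounded: "E t \<le> E 0 + C0 * integral {0..t} uv - (C0 + C1) * (xdelta t - xdelta 0) + integral {0..t} BO"
    if t: "t \<in> {0..tf}" for t
  proof (rule energy_bound_of_energy_rate)
    show uv: "continuous_on {0..t} uv" using smooth(5) continuous_on_subset by blast
    have "continuous_on {0..t} (\<lambda>\<tau>. gamma * uv \<tau> + (1 - gamma) * pdt xv delta \<tau>)"
      by (intro continuous_intros uv C1_plane_continuous_on[OF x1v])
    then have ul: "continuous_on {0..t} ul"
      by (rule continuous_on_cong[THEN iffD1, rotated 2]) (use mass t in \<open>auto simp: ud_def\<close>)
    have J0: "pdx xv xi0 \<tau> \<noteq> 0" "pdx xl etan \<tau> \<noteq> 0" if "\<tau> \<in> {0..t}" for \<tau>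
      using Jpos(1)[rule_format, of xi0 \<tau>] Jpos(2)[rule_format, of etan \<tau>] dom t that
      unfolding J_def by auto
    show "continuous_on {0..t} BO"
      unfolding BO_flux by (intro continuous_on_diff continuous_on_energy_flux x1v x1l T1v T1l uv ul J0)
    fix \<tau> assume "\<tau> \<in> {0..t}"
    then have \<tau>: "\<tau> \<in> {0..tf}" using t by auto
    show "(E has_real_derivative C0 * (uv \<tau> - ud \<tau>) - C1 * ud \<tau> + BO \<tau> - D \<tau>) (at \<tau>)"
      using rate[OF \<tau>] unfolding a_def ud_def by simp
    show "(xdelta has_real_derivative ud \<tau>) (at \<tau>)"
      unfolding interface_pos(1) ud_def by (rule C1_plane_has_pdt[OF x1v])
    show "0 \<le> D \<tau>"
      unfolding D_def using pos Jpos \<tau>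
      by (intro add_nonneg_nonneg mult_nonneg_nonneg integral_nonneg_unconditional divide_nonneg_pos) auto
  qed (use t in simp)
  show ?thesis using rate dissipative bounded by blast
qed

end
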